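(* Let $(A,\circ,\cap)$ be a right normal band with intersection. For all $a,b\in A$, $a=a\circ b$ if and only if $a=a\cap b$.
   Context: A right normal band with intersection $(A,\circ,\cap)$: $(A,\circ)$ a semigroup with $x\circ x=x$ and $(x\circ y)\circ z=(y\circ x)\circ z$; $(A,\cap)$ a semilattice (associative, commutative, idempotent); $(x\cap y)\circ x=x\cap y$ and $x\circ(y\cap z)=(x\circ y)\cap z$ for all $x,y,z$. (The relation $a=a\circ b$ is the natural order $a\le b$.) *)

theory Defs
  imports Main
begin

definition right_normal_band_with_intersection ::
  "('a \<Rightarrow> 'a \<Rightarrow> 'a) \<Rightarrow> ('a \<Rightarrow> 'a \<Rightarrow> 'a) \<Rightarrow> bool" where
  "right_normal_band_with_intersection cmp meet \<longleftrightarrow>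
     (\<forall>x y z. cmp (cmp x y) z = cmp x (cmp y z)) \<and>
     (\<forall>x. cmp x x = x) \<and>
     (\<forall>x y z. cmp (cmp x y) z = cmp (cmp y x) z) \<and>
     (\<forall>x y z. meet (meet x y) z = meet x (meet y z)) \<and>
     (\<forall>x y. meet x y = meet y x) \<and>
     (\<forall>x. meet x x = x) \<and>
     (\<forall>x y. cmp (meet x y) x = meet x y) \<and>
     (\<forall>x y z. cmp x (meet y z) = meet (cmp x y) z)"

end

theory Submission
  imports Defs
begin

lemma meet_eq_if_cmp_eq:
  fixes cmp meet :: "'a \<Rightarrow> 'a \<Rightarrow> 'a"
  assumes cmp_idem: "\<And>x. cmp x x = x"
    and meet_commute: "\<And>x y. meet x y = meet y x"
    and meet_idem: "\<And>x. meet x x = x"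
    and cmp_meet_distrib: "\<And>x y z. cmp x (meet y z) = meet (cmp x y) z"
    and "a = cmp a b"
  shows "a = meet a b"
proof -
  have "a = meet (cmp a b) a" using \<open>a = cmp a b\<close> meet_idem by metis
  also have "\<dots> = cmp a (meet b a)" by (rule cmp_meet_distrib [symmetric])
  also have "\<dots> = cmp a (meet a b)" by (simp only: meet_commute)
  also have "\<dots> = meet a b" by (simp only: cmp_meet_distrib cmp_idem)
  finally show ?thesis .
qed

lemma cmp_eq_if_meet_eq:
  fixes cmp meet :: "'a \<Rightarrow> 'a \<Rightarrow> 'a"
  assumes meet_commute: "\<And>x y. meet x y = meet y x"
    and cmp_meet_absorb: "\<And>x y. cmp (meet x y) x = meet x y"
    and "a = meet a b"
  shows "a = cmp a b"
proof -
  have "a = meet b a" using \<open>a = meet a b\<close> meet_commute by metis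
  then show ?thesis using cmp_meet_absorb [of b a] by simp
qed

theorem proposition3p8:
  fixes cmp :: "'a \<Rightarrow> 'a \<Rightarrow> 'a" and meet :: "'a \<Rightarrow> 'a \<Rightarrow> 'a"
  assumes "right_normal_band_with_intersection cmp meet"
  shows "\<forall>a b. a = cmp a b \<longleftrightarrow> a = meet a b"
proof -
  have "\<And>x. cmp x x = x" "\<And>x y. meet x y = meet y x" "\<And>x. meet x x = x"
    "\<And>x y. cmp (meet x y) x = meet x y" "\<And>x y z. cmp x (meet y z) = meet (cmp x y) z"
    using assms unfolding right_normal_band_with_intersection_def by blast+
  then show ?thesis
    using meet_eq_if_cmp_eq [of cmp meet] cmp_eq_if_meet_eq [of meet cmp] by blast
qed

end
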